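(* Assume $D^SU\le0$ on $\mathbb{R}^d$. Let $(k_j,\varepsilon_j)$ be a sequence with $k_j\to+\infty$, $\varepsilon_j\to0$, $0<\varepsilon_j\le1$, such that $\rho_{k_j,\varepsilon_j}\to\rho$ in $C([0,T];L^1_{loc}(\mathbb{R}^d))$ and $p_{k_j,\varepsilon_j}\rightharpoonup p$ weakly-$*$ in $L^\infty(Q_T)$. Then $0\le\rho\le1$, $0\le p\le1$, \[ \partial_t\rho+\nabla\cdot\big(\rho(1-p)U\big)=0\quad\text{in }\mathcal{D}'((0,T)\times\mathbb{R}^d), \] and $p(1-\rho)=0$ almost everywhere in $Q_T$.
   Context: Setting: let $d\ge1$, $T>0$, $U\in W^{2,\infty}(\mathbb{R}^d;\mathbb{R}^d)$, $Q_T=[0,T]\times\mathbb{R}^d$. For $k>0$ let $F_k(\rho)=\rho(1-\rho^k)$ for $\rho\in[0,1]$. The initial datum $\rho^0\in L^1(\mathbb{R}^d)\cap L^\infty(\mathbb{R}^d)\cap BV(\mathbb{R}^d)$ satisfies $0\le\rho^0\le1$ and $\int_{\mathbb{R}^d}\rho^0=1$. For $k>0$, $\varepsilon>0$, $\rho_{k,\varepsilon}$ denotes the unique solution in $L^1(Q_T)\cap L^\infty(Q_T)$ of the parabolic problem $\partial_t\rho+\nabla\cdot(F_k(\rho)U)=\varepsilon\Delta\rho$ on $Q_T$, $\rho(0)=\rho^0$; it is smooth on $(0,T]\times\mathbb{R}^d$, satisfies $0\le\rho_{k,\varepsilon}\le1$ and $\int\rho_{k,\varepsilon}(t)\,dx=1$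 for all $t$. The pressure is $p_{k,\varepsilon}=\rho_{k,\varepsilon}^k$. $D^SU=\tfrac12(DU+DU^{T})$; $D^SU\le0$ in the sense of symmetric matrices. *)

theory Defs
  imports "HOL-Analysis.Analysis"
begin

definition dderiv :: "('a::euclidean_space \<Rightarrow> real) \<Rightarrow> 'a \<Rightarrow> 'a \<Rightarrow> real" where
  "dderiv f v x = frechet_derivative f (at x) v"

fun iter_dderiv :: "('a::euclidean_space \<Rightarrow> real) \<Rightarrow> 'a list \<Rightarrow> 'a \<Rightarrow> real" where
  "iter_dderiv f [] = f"
| "iter_dderiv f (v # vs) = dderiv (iter_dderiv f vs) v"

definition smooth_on :: "'a::euclidean_space set \<Rightarrow> ('a \<Rightarrow> real) \<Rightarrow> bool" where
  "smooth_on S f \<longleftrightarrow> (\<forall>vs. \<forall>x\<in>S. iter_dderiv f vs differentiable (at x))"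

definition test_fun :: "'a::euclidean_space set \<Rightarrow> ('a \<Rightarrow> real) \<Rightarrow> bool" where
  "test_fun Om \<phi> \<longleftrightarrow> smooth_on UNIV \<phi> \<and> compact (closure {x. \<phi> x \<noteq> 0})
      \<and> closure {x. \<phi> x \<noteq> 0} \<subseteq> Om"

definition dt :: "(real \<times> (real^'d) \<Rightarrow> real) \<Rightarrow> real \<times> (real^'d) \<Rightarrow> real" where
  "dt \<phi> = dderiv \<phi> (1, 0)"

definition dx :: "'d::finite \<Rightarrow> (real \<times> (real^'d) \<Rightarrow> real) \<Rightarrow> real \<times> (real^'d) \<Rightarrow> real" where
  "dx i \<phi> = dderiv \<phi> (0, axis i 1)"

definition grad_x :: "(real \<times> (real^'d::finite) \<Rightarrow> real) \<Rightarrow> real \<times> (real^'d) \<Rightarrow> real^'d" where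
  "grad_x \<phi> z = (\<chi> i. dx i \<phi> z)"

definition lap_x :: "(real \<times> (real^'d::finite) \<Rightarrow> real) \<Rightarrow> real \<times> (real^'d) \<Rightarrow> real" where
  "lap_x \<phi> z = (\<Sum>i\<in>UNIV. dx i (dx i \<phi>) z)"

definition QT :: "real \<Rightarrow> (real \<times> (real^'d::finite)) set" where
  "QT T = {0..T} \<times> UNIV"

definition Linf :: "'a::euclidean_space set \<Rightarrow> ('a \<Rightarrow> real) \<Rightarrow> bool" where
  "Linf S f \<longleftrightarrow> f \<in> borel_measurable lborel \<and> (\<exists>C. AE x in lborel. x \<in> S \<longrightarrow> \<bar>f x\<bar> \<le> C)"

definition weak_partial :: "(real^'d::finite \<Rightarrow> real) \<Rightarrow> 'd \<Rightarrow> (real^'d \<Rightarrow> real) \<Rightarrow> bool" where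
  "weak_partial f i g \<longleftrightarrow> (\<forall>\<phi>. test_fun UNIV \<phi> \<longrightarrow>
      (\<integral>x. f x * dderiv \<phi> (axis i 1) x \<partial>lborel) = - (\<integral>x. g x * \<phi> x \<partial>lborel))"

definition W2inf :: "(real^'d::finite \<Rightarrow> real^'d) \<Rightarrow> bool" where
  "W2inf U \<longleftrightarrow> (\<exists>G H. (\<forall>m. Linf UNIV (\<lambda>x. U x $ m))
      \<and> (\<forall>m i. Linf UNIV (G m i) \<and> weak_partial (\<lambda>x. U x $ m) i (G m i))
      \<and> (\<forall>m i j. Linf UNIV (H m i j) \<and> weak_partial (G m i) j (H m i j)))"

definition DSU_nonpos :: "(real^'d::finite \<Rightarrow> real^'d) \<Rightarrow> bool" where
  "DSU_nonpos U \<longleftrightarrow> (\<exists>G. (\<forall>m i. weak_partial (\<lambda>x. U x $ m) i (G m i))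
      \<and> (AE x in lborel. \<forall>\<xi>::real^'d.
           (\<Sum>m\<in>UNIV. \<Sum>i\<in>UNIV. \<xi> $ m * ((G m i x + G i m x) / 2) * \<xi> $ i) \<le> 0))"

definition div_field :: "(real^'d::finite \<Rightarrow> real^'d) \<Rightarrow> real^'d \<Rightarrow> real" where
  "div_field \<phi> x = (\<Sum>i\<in>UNIV. dderiv (\<lambda>y. \<phi> y $ i) (axis i 1) x)"

definition BV :: "(real^'d::finite \<Rightarrow> real) \<Rightarrow> bool" where
  "BV f \<longleftrightarrow> integrable lborel f \<and> (\<exists>M. \<forall>\<phi>::real^'d \<Rightarrow> real^'d.
      (\<forall>i. test_fun UNIV (\<lambda>y. \<phi> y $ i)) \<and> (\<forall>y. norm (\<phi> y) \<le> 1) \<longrightarrow>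
      (\<integral>x. f x * div_field \<phi> x \<partial>lborel) \<le> M)"

definition Fk :: "real \<Rightarrow> real \<Rightarrow> real" where
  "Fk k r = r * (1 - r powr k)"

definition parabolic_sol ::
  "(real^'d::finite \<Rightarrow> real^'d) \<Rightarrow> (real^'d \<Rightarrow> real) \<Rightarrow> real \<Rightarrow> real \<Rightarrow> real
     \<Rightarrow> (real \<times> (real^'d) \<Rightarrow> real) \<Rightarrow> bool" where
  "parabolic_sol U rho0 T k eps r \<longleftrightarrow>
     set_integrable lborel (QT T) r \<and> Linf (QT T) r
   \<and> (\<forall>\<phi>. test_fun ({..<T} \<times> UNIV) \<phi> \<longrightarrow>
        (LINT z:QT T|lborel. r z * dt \<phi> z + Fk k (r z) * (U (snd z) \<bullet> grad_x \<phi> z)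
                              + eps * r z * lap_x \<phi> z)
        + (\<integral>x. rho0 x * \<phi> (0, x) \<partial>lborel) = 0)
   \<and> smooth_on ({0<..<T} \<times> UNIV) r
   \<and> (\<forall>z\<in>QT T. 0 \<le> r z \<and> r z \<le> 1)
   \<and> (\<forall>t\<in>{0..T}. integrable lborel (\<lambda>x. r (t, x)) \<and> (\<integral>x. r (t, x) \<partial>lborel) = 1)"

end

theory Submission
  imports Defs
begin

text \<open>
  Every term of the limit equation is an integral over \<open>Q\<^sub>T\<close> of \<open>\<rho>\<^sub>j\<close> or of the pressure
  \<open>p\<^sub>j = \<rho>\<^sub>j powr k\<^sub>j\<close> against an essentially bounded function \<open>G\<close> vanishing outside a
  bounded set. Replacing \<open>\<rho>\<^sub>j\<close> by \<open>r\<close> in such an integral costs at most \<open>sup |G|\<close> times the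
  \<open>L\<^sup>1\<close> distance of \<open>\<rho>\<^sub>j\<close> and \<open>r\<close> on a slab \<open>[0,T] \<times> K\<close>, which is at most \<open>T\<close> times the
  supremum in time of their distance on \<open>K\<close> and hence tends to \<open>0\<close>; after this replacement
  the remaining factor \<open>p\<^sub>j\<close> converges weakly-* to \<open>p\<close>. Since \<open>F\<^sub>k(\<rho>) = \<rho> - \<rho>\<^sup>k \<rho>\<close>,
  the flux of the viscous problem tends to \<open>r - p r\<close>, while the viscous term carries the
  vanishing factor \<open>\<epsilon>\<^sub>j\<close>. The bounds on \<open>r\<close> and \<open>p\<close> follow by testing with indicators of
  bounded sets, and complementarity from \<open>\<rho>\<^sup>k (1 - \<rho>) \<le> 1/k\<close>: on every bounded
  \<open>A \<subseteq> Q\<^sub>T\<close>, \<open>\<integral>\<^sub>A p (1 - r) = lim \<integral>\<^sub>A p\<^sub>j (1 - \<rho>\<^sub>j) = 0\<close>.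

  The hypotheses on \<open>\<rho>\<^sup>0\<close>, on \<open>D\<^sup>S U\<close> and \<open>\<epsilon>\<^sub>j \<le> 1\<close> serve to obtain the assumed
  compactness; passing to the limit uses only \<open>U \<in> L\<^sup>\<infinity>\<close>.
\<close>

lemma integrable_if_bounded_by_indicator:
  fixes f :: "'a::euclidean_space \<Rightarrow> real"
  assumes "f \<in> borel_measurable lborel" "B \<in> sets lborel" "bounded B"
    and "AE x in lborel. \<bar>f x\<bar> \<le> C * indicator B x"
  shows "integrable lborel f"
proof (rule Bochner_Integration.integrable_bound[OF _ assms(1)])
  show "integrable lborel (\<lambda>x. C * indicator B x)"
    using assms(2,3) emeasure_bounded_finite integrable_real_indicator by blast
  show "AE x in lborel. norm (f x) \<le> norm (C * indicator B x)"
    using assms(4) by eventually_elim auto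
qed

lemma tendsto_integral_if_L1_close:
  fixes f g :: "nat \<Rightarrow> 'a \<Rightarrow> real"
  assumes f: "\<And>j. integrable M (f j)" and g: "\<And>j. integrable M (g j)"
    and h: "\<And>j. h j \<in> borel_measurable M" "(\<lambda>j. \<integral>\<^sup>+x. ennreal (h j x) \<partial>M) \<longlonglongrightarrow> 0"
    and close: "\<And>j. AE x in M. \<bar>f j x - g j x\<bar> \<le> C * h j x" and "0 \<le> C"
    and lim: "(\<lambda>j. \<integral>x. g j x \<partial>M) \<longlonglongrightarrow> l"
  shows "(\<lambda>j. \<integral>x. f j x \<partial>M) \<longlonglongrightarrow> l"
proof -
  have bound: "ennreal \<bar>(\<integral>x. f j x \<partial>M) - (\<integral>x. g j x \<partial>M)\<bar> \<le> ennreal C * (\<integral>\<^sup>+x. ennreal (h j x) \<partial>M)" for j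
  proof -
    have "ennreal \<bar>(\<integral>x. f j x \<partial>M) - (\<integral>x. g j x \<partial>M)\<bar> = ennreal (norm (\<integral>x. f j x - g j x \<partial>M))"
      using f g by simp
    also have "\<dots> \<le> (\<integral>\<^sup>+x. ennreal (norm (f j x - g j x)) \<partial>M)"
      using f g by (intro integral_norm_bound_ennreal) simp
    also have "\<dots> \<le> (\<integral>\<^sup>+x. ennreal C * ennreal (h j x) \<partial>M)"
      using close[of j] by (intro nn_integral_mono_AE) (auto elim!: eventually_mono
          simp: ennreal_mult'[symmetric] \<open>0 \<le> C\<close> intro: ennreal_leI)
    also have "\<dots> = ennreal C * (\<integral>\<^sup>+x. ennreal (h j x) \<partial>M)"
      using h(1) by (intro nn_integral_cmult) simp
    finally show ?thesis .
  qed
  have "(\<lambda>j. ennreal C * (\<integral>\<^sup>+x. ennreal (h j x) \<partial>M)) \<longlonglongrightarrow> ennreal C * 0"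
    by (intro ennreal_tendsto_cmult h(2)) simp
  then have bound_0: "(\<lambda>j. ennreal C * (\<integral>\<^sup>+x. ennreal (h j x) \<partial>M)) \<longlonglongrightarrow> 0"
    by simp
  have "(\<lambda>j. ennreal \<bar>(\<integral>x. f j x \<partial>M) - (\<integral>x. g j x \<partial>M)\<bar>) \<longlonglongrightarrow> 0"
    by (rule tendsto_sandwich[OF _ _ tendsto_const bound_0]) (simp_all add: bound)
  then have "(\<lambda>j. (\<integral>x. f j x \<partial>M) - (\<integral>x. g j x \<partial>M)) \<longlonglongrightarrow> 0"
    by (simp add: ennreal_tendsto_0_iff tendsto_rabs_zero_iff)
  from tendsto_add[OF this lim] show ?thesis by simp
qed

lemma nn_integral_slab_le_SUP:
  fixes f :: "real \<times> 'b::euclidean_space \<Rightarrow> ennreal"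
  assumes f: "f \<in> borel_measurable lborel" and K: "K \<in> sets lborel" and "a \<le> b"
  shows "(\<integral>\<^sup>+z. f z * indicator ({a..b} \<times> K) z \<partial>lborel)
    \<le> ennreal (b - a) * (SUP t\<in>{a..b}. \<integral>\<^sup>+x\<in>K. f (t, x) \<partial>lborel)"
proof -
  let ?S = "SUP t\<in>{a..b}. \<integral>\<^sup>+x\<in>K. f (t, x) \<partial>lborel"
  have "{a..b} \<times> K \<in> sets (lborel \<Otimes>\<^sub>M lborel)"
    using K by (intro pair_measureI) auto
  then have "(\<lambda>z. f z * indicator ({a..b} \<times> K) z) \<in> borel_measurable (lborel \<Otimes>\<^sub>M lborel)"
    using f unfolding lborel_prod by measurable
  then have "(\<integral>\<^sup>+z. f z * indicator ({a..b} \<times> K) z \<partial>lborel)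
      = (\<integral>\<^sup>+t. \<integral>\<^sup>+x. f (t, x) * indicator ({a..b} \<times> K) (t, x) \<partial>lborel \<partial>lborel)"
    by (subst lborel_prod[symmetric]) (rule lborel.nn_integral_fst[symmetric])
  also have "\<dots> \<le> (\<integral>\<^sup>+t. ?S * indicator {a..b} t \<partial>lborel)"
  proof (intro nn_integral_mono)
    fix t
    show "(\<integral>\<^sup>+x. f (t, x) * indicator ({a..b} \<times> K) (t, x) \<partial>lborel) \<le> ?S * indicator {a..b} t"
    proof (cases "t \<in> {a..b}")
      case True
      then have "(\<integral>\<^sup>+x. f (t, x) * indicator ({a..b} \<times> K) (t, x) \<partial>lborel) = (\<integral>\<^sup>+x\<in>K. f (t, x) \<partial>lborel)"
        by (intro nn_integral_cong) (simp add: indicator_def)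
      also have "\<dots> \<le> ?S"
        using True by (rule SUP_upper)
      finally show ?thesis
        using True by simp
    next
      case False
      then have "(\<lambda>x. f (t, x) * indicator ({a..b} \<times> K) (t, x)) = (\<lambda>_. 0)"
        by (auto simp: indicator_def)
      then show ?thesis
        by simp
    qed
  qed
  also have "\<dots> = ?S * emeasure lborel {a..b}"
    by (rule nn_integral_cmult_indicator) simp
  also have "\<dots> = ennreal (b - a) * ?S"
    using \<open>a \<le> b\<close> by (simp add: ac_simps)
  finally show ?thesis .
qed

lemma AE_on_if_AE_on_cballs:
  fixes S :: "'a::euclidean_space set"
  assumes "\<And>n::nat. AE x in M. x \<in> S \<inter> cball 0 n \<longrightarrow> P x"
  shows "AE x in M. x \<in> S \<longrightarrow> P x"
proof -
  have "AE x in M. \<forall>n::nat. x \<in> S \<inter> cball 0 n \<longrightarrow> P x"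
    unfolding AE_all_countable using assms by blast
  then show ?thesis
    by (rule eventually_mono) (meson IntI mem_cball_0 real_arch_simple)
qed

lemma set_integral_mult_indicator_subset:
  fixes f :: "'a \<Rightarrow> real"
  assumes "A \<subseteq> S"
  shows "(LINT x:S|M. f x * indicator A x) = (LINT x:A|M. f x)"
  unfolding set_lebesgue_integral_def
  using assms by (intro Bochner_Integration.integral_cong) (auto simp: indicator_def)

lemma powr_mult_one_minus_le:
  fixes x k :: real
  assumes "0 \<le> x" "x \<le> 1" "0 < k"
  shows "x powr k * (1 - x) \<le> 1 / k"
proof (cases "x = 0")
  case False
  define y where "y = 1 - x"
  have "x powr k = exp (k * ln x)"
    using False assms(1) by (simp add: powr_def)
  also have "\<dots> \<le> exp (- (k * y))"
    using mult_left_mono[OF ln_le_minus_one[of x]] False assms by (simp add: y_def algebra_simps)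
  finally have "x powr k * y \<le> exp (- (k * y)) * y"
    using assms by (intro mult_right_mono) (auto simp: y_def)
  also have "\<dots> = (k * y / exp (k * y)) / k"
    using assms(3) by (simp add: exp_minus field_simps)
  also have "\<dots> \<le> 1 / k"
  proof -
    have "k * y \<le> exp (k * y)"
      using exp_ge_add_one_self[of "k * y"] by linarith
    then show ?thesis
      using assms(3) by (intro divide_right_mono) (auto simp: divide_le_eq_1)
  qed
  finally show ?thesis by (simp add: y_def)
qed (use assms in simp)

section \<open>Essentially bounded functions\<close>

lemma Linf_const: "Linf S (\<lambda>_. c)"
  unfolding Linf_def by (intro conjI exI[of _ "\<bar>c\<bar>"] AE_I2) auto

lemma Linf_mult:
  assumes "Linf S f" "Linf S g"
  shows "Linf S (\<lambda>x. f x * g x)"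
proof -
  obtain C D where C: "AE x in lborel. x \<in> S \<longrightarrow> \<bar>f x\<bar> \<le> C"
    and D: "AE x in lborel. x \<in> S \<longrightarrow> \<bar>g x\<bar> \<le> D"
    using assms unfolding Linf_def by blast
  from C D have "AE x in lborel. x \<in> S \<longrightarrow> \<bar>f x * g x\<bar> \<le> C * D"
    by eventually_elim (auto simp: abs_mult intro: mult_mono')
  then show ?thesis
    using assms unfolding Linf_def by auto
qed

lemma Linf_add:
  assumes "Linf S f" "Linf S g"
  shows "Linf S (\<lambda>x. f x + g x)"
proof -
  obtain C D where C: "AE x in lborel. x \<in> S \<longrightarrow> \<bar>f x\<bar> \<le> C"
    and D: "AE x in lborel. x \<in> S \<longrightarrow> \<bar>g x\<bar> \<le> D"
    using assms unfolding Linf_def by blast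
  from C D have "AE x in lborel. x \<in> S \<longrightarrow> \<bar>f x + g x\<bar> \<le> C + D"
    by eventually_elim auto
  then show ?thesis
    using assms unfolding Linf_def by auto
qed

lemma Linf_diff:
  assumes "Linf S f" "Linf S g"
  shows "Linf S (\<lambda>x. f x - g x)"
  using Linf_add[OF assms(1) Linf_mult[OF Linf_const[of S "-1"] assms(2)]] by simp

lemma Linf_UNIV_snd:
  fixes f :: "'b::euclidean_space \<Rightarrow> real"
  assumes "Linf UNIV f"
  shows "Linf UNIV (\<lambda>z::'a::euclidean_space \<times> 'b. f (snd z))"
proof -
  obtain C where f: "f \<in> borel_measurable lborel" and C: "AE y in lborel. \<bar>f y\<bar> \<le> C"
    using assms unfolding Linf_def by auto
  have "(\<lambda>z. f (snd z)) \<in> borel_measurable (lborel \<Otimes>\<^sub>M lborel)"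
    using f by measurable
  moreover have "AE z in lborel \<Otimes>\<^sub>M lborel. \<bar>f (snd z)\<bar> \<le> C"
  proof (rule lborel_pair.AE_pair_measure)
    show "{z \<in> space (lborel \<Otimes>\<^sub>M lborel). \<bar>f (snd z)\<bar> \<le> C} \<in> sets (lborel \<Otimes>\<^sub>M lborel)"
      using f by measurable
    show "AE x in lborel. AE y in lborel. \<bar>f (snd (x, y))\<bar> \<le> C"
      using C by simp
  qed
  ultimately show ?thesis
    unfolding Linf_def lborel_prod by auto
qed

lemma Linf_set_integrable:
  fixes f :: "'a::euclidean_space \<Rightarrow> real"
  assumes f: "Linf S f" and A: "A \<in> sets lborel" "bounded A" "A \<subseteq> S"
  shows "set_integrable lborel A f"
proof -
  obtain C where meas: "f \<in> borel_measurable lborel" and C: "AE x in lborel. x \<in> S \<longrightarrow> \<bar>f x\<bar> \<le> C"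
    using f unfolding Linf_def by blast
  have "integrable lborel (\<lambda>x. indicator A x * f x)"
  proof (rule integrable_if_bounded_by_indicator[OF _ A(1,2)])
    show "(\<lambda>x. indicator A x * f x) \<in> borel_measurable lborel"
      using A(1) meas by measurable
    show "AE x in lborel. \<bar>indicator A x * f x\<bar> \<le> C * indicator A x"
      using C by eventually_elim (use A(3) in \<open>auto simp: indicator_def\<close>)
  qed
  then show ?thesis
    by (simp add: set_integrable_def)
qed

lemma AE_nonneg_if_set_integrals_nonneg:
  fixes f :: "'a::euclidean_space \<Rightarrow> real"
  assumes f: "Linf S f" and S: "S \<in> sets lborel"
    and nonneg: "\<And>A. A \<in> sets lborel \<Longrightarrow> bounded A \<Longrightarrow> A \<subseteq> S \<Longrightarrow> 0 \<le> (LINT x:A|lborel. f x)"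
  shows "AE x in lborel. x \<in> S \<longrightarrow> 0 \<le> f x"
proof (rule AE_on_if_AE_on_cballs)
  fix n :: nat
  define A where "A = S \<inter> cball 0 n \<inter> {x. f x < 0}"
  have A: "A \<in> sets lborel" "bounded A" "A \<subseteq> S"
    using f S unfolding A_def Linf_def by auto
  have int: "integrable lborel (\<lambda>x. indicator A x * - f x)"
    using Linf_set_integrable[OF f A] by (simp add: set_integrable_def)
  have "0 \<le> (LINT x:A|lborel. f x)"
    using nonneg A by blast
  then have "(\<integral>x. indicator A x * - f x \<partial>lborel) \<le> 0"
    by (simp add: set_lebesgue_integral_def)
  moreover have nn: "AE x in lborel. 0 \<le> indicator A x * - f x"
    by (auto simp: A_def indicator_def)
  ultimately have "AE x in lborel. indicator A x * - f x = 0"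
    using integral_nonneg_eq_0_iff_AE[OF int nn] integral_nonneg_AE[OF nn] by simp
  then show "AE x in lborel. x \<in> S \<inter> cball 0 n \<longrightarrow> 0 \<le> f x"
    by eventually_elim (auto simp: A_def indicator_def)
qed

lemma AE_le_if_set_integrals_le:
  fixes f g :: "'a::euclidean_space \<Rightarrow> real"
  assumes f: "Linf S f" and g: "Linf S g" and S: "S \<in> sets lborel"
    and le: "\<And>A. A \<in> sets lborel \<Longrightarrow> bounded A \<Longrightarrow> A \<subseteq> S \<Longrightarrow>
      (LINT x:A|lborel. f x) \<le> (LINT x:A|lborel. g x)"
  shows "AE x in lborel. x \<in> S \<longrightarrow> f x \<le> g x"
proof -
  have "AE x in lborel. x \<in> S \<longrightarrow> 0 \<le> g x - f x"
  proof (rule AE_nonneg_if_set_integrals_nonneg[OF Linf_diff[OF g f] S])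
    fix A assume A: "A \<in> sets lborel" "bounded A" "A \<subseteq> S"
    have "(LINT x:A|lborel. g x - f x) = (LINT x:A|lborel. g x) - (LINT x:A|lborel. f x)"
      using A f g by (intro set_integral_diff Linf_set_integrable) auto
    then show "0 \<le> (LINT x:A|lborel. g x - f x)"
      using le[OF A] by simp
  qed
  then show ?thesis
    by eventually_elim simp
qed

definition Linf_bounded_support :: "'a::euclidean_space set \<Rightarrow> ('a \<Rightarrow> real) \<Rightarrow> bool" where
  "Linf_bounded_support S G \<longleftrightarrow>
     Linf UNIV G \<and> (\<exists>B\<in>sets lborel. bounded B \<and> B \<subseteq> S \<and> (\<forall>x. x \<notin> B \<longrightarrow> G x = 0))"

lemma Linf_bounded_support_mono:
  "Linf_bounded_support S G \<Longrightarrow> S \<subseteq> S' \<Longrightarrow> Linf_bounded_support S' G"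
  unfolding Linf_bounded_support_def by blast

lemma Linf_bounded_support_mult:
  assumes "Linf UNIV a" "Linf_bounded_support S G"
  shows "Linf_bounded_support S (\<lambda>x. a x * G x)"
  unfolding Linf_bounded_support_def
proof
  show "Linf UNIV (\<lambda>x. a x * G x)"
    using assms by (intro Linf_mult) (auto simp: Linf_bounded_support_def)
  obtain B where "B \<in> sets lborel" "bounded B" "B \<subseteq> S" "\<forall>x. x \<notin> B \<longrightarrow> G x = 0"
    using assms(2) unfolding Linf_bounded_support_def by blast
  then show "\<exists>B\<in>sets lborel. bounded B \<and> B \<subseteq> S \<and> (\<forall>x. x \<notin> B \<longrightarrow> a x * G x = 0)"
    by auto
qed

lemma Linf_bounded_support_sum:
  assumes "finite I" "\<And>i. i \<in> I \<Longrightarrow> Linf_bounded_support S (G i)"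
  shows "Linf_bounded_support S (\<lambda>x. \<Sum>i\<in>I. G i x)"
  using assms
proof (induction I rule: finite_induct)
  case empty
  show ?case
    unfolding Linf_bounded_support_def Linf_def by (auto intro: bexI[of _ "{}"])
next
  case (insert i I)
  have Gi: "Linf_bounded_support S (G i)" and GI: "Linf_bounded_support S (\<lambda>x. \<Sum>i\<in>I. G i x)"
    using insert by auto
  obtain B B' where "B \<in> sets lborel" "bounded B" "B \<subseteq> S" "\<forall>x. x \<notin> B \<longrightarrow> G i x = 0"
    and "B' \<in> sets lborel" "bounded B'" "B' \<subseteq> S" "\<forall>x. x \<notin> B' \<longrightarrow> (\<Sum>i\<in>I. G i x) = 0"
    using Gi GI unfolding Linf_bounded_support_def by blast
  then have "\<exists>B''\<in>sets lborel. bounded B'' \<and> B'' \<subseteq> S \<and> (\<forall>x. x \<notin> B'' \<longrightarrow> G i x + (\<Sum>i\<in>I. G i x) = 0)"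
    by (intro bexI[of _ "B \<union> B'"]) auto
  moreover have "Linf UNIV (\<lambda>x. G i x + (\<Sum>i\<in>I. G i x))"
    using Gi GI by (intro Linf_add) (simp_all add: Linf_bounded_support_def)
  ultimately show ?case
    using insert by (simp add: Linf_bounded_support_def)
qed

lemma Linf_bounded_support_indicator:
  "A \<in> sets lborel \<Longrightarrow> bounded A \<Longrightarrow> A \<subseteq> S \<Longrightarrow> Linf_bounded_support S (indicator A)"
  unfolding Linf_bounded_support_def Linf_def
  by (intro conjI bexI[of _ A] exI[of _ 1] AE_I2) (auto simp: indicator_def)

lemma Linf_bounded_support_set_integrable:
  assumes G: "Linf_bounded_support S G" and S: "S \<in> sets lborel" and a: "Linf S a"
  shows "set_integrable lborel S (\<lambda>x. a x * G x)"
proof -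
  obtain B where B: "B \<in> sets lborel" "bounded B" "B \<subseteq> S" and vanish: "\<And>x. x \<notin> B \<Longrightarrow> G x = 0"
    using G unfolding Linf_bounded_support_def by blast
  have "Linf S (\<lambda>x. a x * G x)"
    using G a by (intro Linf_mult) (auto simp: Linf_bounded_support_def Linf_def)
  then have "set_integrable lborel B (\<lambda>x. a x * G x)"
    using B by (rule Linf_set_integrable)
  moreover have "(\<lambda>x. indicator S x *\<^sub>R (a x * G x)) = (\<lambda>x. indicator B x *\<^sub>R (a x * G x))"
    using B(3) vanish by (auto simp: indicator_def fun_eq_iff)
  ultimately show ?thesis
    by (simp add: set_integrable_def)
qed

section \<open>Test functions\<close>

lemma dderiv_eq_0_outside:
  fixes f :: "'a::euclidean_space \<Rightarrow> real"
  assumes "closed S" "\<And>x. x \<notin> S \<Longrightarrow> f x = 0" "x \<notin> S"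
  shows "dderiv f v x = 0"
proof -
  have "((\<lambda>_. 0) has_derivative (\<lambda>_. 0)) (at x)"
    by simp
  then have "(f has_derivative (\<lambda>_. 0)) (at x)"
    by (rule has_derivative_transform_within_open[of _ _ _ _ "- S"]) (use assms in auto)
  then show ?thesis
    unfolding dderiv_def by (metis frechet_derivative_at)
qed

lemma iter_dderiv_eq_0_outside:
  fixes f :: "'a::euclidean_space \<Rightarrow> real"
  assumes "closed S" "\<And>x. x \<notin> S \<Longrightarrow> f x = 0" "x \<notin> S"
  shows "iter_dderiv f vs x = 0"
  using assms(3)
proof (induction vs arbitrary: x)
  case (Cons v vs)
  then show ?case
    using dderiv_eq_0_outside[OF assms(1), of "iter_dderiv f vs"] by simp
qed (use assms in simp)

lemma continuous_on_iter_dderiv: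
  "smooth_on UNIV f \<Longrightarrow> continuous_on UNIV (iter_dderiv f vs)"
  unfolding smooth_on_def
  by (meson continuous_at_imp_continuous_on differentiable_imp_continuous_within UNIV_I)

lemma test_fun_iter_dderiv:
  assumes "test_fun S \<phi>"
  shows "Linf_bounded_support S (iter_dderiv \<phi> vs)"
proof -
  define K where "K = closure {x. \<phi> x \<noteq> 0}"
  have smooth: "smooth_on UNIV \<phi>" and K: "compact K" "K \<subseteq> S"
    using assms unfolding test_fun_def K_def by auto
  have cont: "continuous_on UNIV (iter_dderiv \<phi> vs)"
    by (rule continuous_on_iter_dderiv[OF smooth])
  have "closed K"
    by (simp add: K_def)
  moreover have "\<phi> x = 0" if "x \<notin> K" for x
    using that closure_subset[of "{x. \<phi> x \<noteq> 0}"] unfolding K_def by blast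
  ultimately have vanish: "iter_dderiv \<phi> vs x = 0" if "x \<notin> K" for x
    using iter_dderiv_eq_0_outside that by metis
  have "bounded (iter_dderiv \<phi> vs ` K)"
    by (intro compact_imp_bounded compact_continuous_image continuous_on_subset[OF cont] K(1)) simp
  then obtain C where C: "\<forall>y\<in>iter_dderiv \<phi> vs ` K. norm y \<le> C"
    unfolding bounded_iff by blast
  have "\<bar>iter_dderiv \<phi> vs x\<bar> \<le> max C 0" for x
    using C vanish by (cases "x \<in> K") force+
  then have "Linf UNIV (iter_dderiv \<phi> vs)"
    unfolding Linf_def using borel_measurable_continuous_onI[OF cont]
    by (intro conjI exI[of _ "max C 0"] AE_I2) auto
  moreover have "K \<in> sets lborel" "bounded K"
    using K(1) by (simp_all add: borel_compact compact_imp_bounded)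
  ultimately show ?thesis
    unfolding Linf_bounded_support_def using K(2) vanish by blast
qed

lemma test_fun_dt:
  "test_fun S \<phi> \<Longrightarrow> Linf_bounded_support S (dt \<phi>)"
  using test_fun_iter_dderiv[of S \<phi> "[(1, 0)]"] by (simp add: dt_def)

lemma test_fun_lap_x:
  assumes "test_fun S \<phi>"
  shows "Linf_bounded_support S (lap_x \<phi>)"
proof -
  have "lap_x \<phi> = (\<lambda>z. \<Sum>i\<in>UNIV. iter_dderiv \<phi> [(0, axis i 1), (0, axis i 1)] z)"
    by (simp add: lap_x_def dx_def fun_eq_iff)
  then show ?thesis
    using assms by (simp only:) (intro Linf_bounded_support_sum test_fun_iter_dderiv; simp)
qed

lemma test_fun_transport:
  assumes "W2inf U" "test_fun S \<phi>"
  shows "Linf_bounded_support S (\<lambda>z. U (snd z) \<bullet> grad_x \<phi> z)"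
proof -
  have "(\<lambda>z. U (snd z) \<bullet> grad_x \<phi> z) = (\<lambda>z. \<Sum>i\<in>UNIV. U (snd z) $ i * iter_dderiv \<phi> [(0, axis i 1)] z)"
    by (simp add: grad_x_def dx_def inner_vec_def fun_eq_iff)
  moreover have "Linf UNIV (\<lambda>z::real \<times> _. U (snd z) $ i)" for i
    using assms(1) by (intro Linf_UNIV_snd) (auto simp: W2inf_def)
  ultimately show ?thesis
    using assms(2) by (simp only:)
      (intro Linf_bounded_support_sum Linf_bounded_support_mult test_fun_iter_dderiv; simp)
qed

section \<open>The incompressible limit\<close>

lemma sets_QT [measurable]: "QT T \<in> sets lborel"
  unfolding QT_def by (simp add: closed_Times)

lemma cylinder_subset_QT: "{0<..<T} \<times> UNIV \<subseteq> QT T"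
  unfolding QT_def by auto

text \<open>Of the viscous problem only \<open>0 \<le> \<rho>\<^sub>j \<le> 1\<close> is assumed here; its weak formulation is
  the hypothesis of \<open>limit_weak_formulation\<close>.\<close>
locale incompressible_limit =
  fixes T :: real and k :: "nat \<Rightarrow> real"
    and rho :: "nat \<Rightarrow> real \<times> (real^'d::finite) \<Rightarrow> real"
    and r p :: "real \<times> (real^'d) \<Rightarrow> real"
  assumes T_pos: "T > 0"
    and k_pos: "\<And>j. k j > 0"
    and k_lim: "filterlim k at_top sequentially"
    and rho_meas [measurable]: "\<And>j. rho j \<in> borel_measurable lborel"
    and rho_bounds: "\<And>j z. z \<in> QT T \<Longrightarrow> 0 \<le> rho j z \<and> rho j z \<le> 1"
    and r_meas [measurable]: "r \<in> borel_measurable lborel"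
    and rho_conv: "\<And>K. compact K \<Longrightarrow>
      (\<lambda>j. SUP t\<in>{0..T}. \<integral>\<^sup>+ x\<in>K. ennreal \<bar>rho j (t, x) - r (t, x)\<bar> \<partial>lborel) \<longlonglongrightarrow> 0"
    and p_Linf: "Linf (QT T) p"
    and p_conv: "\<And>g. set_integrable lborel (QT T) g \<Longrightarrow>
      (\<lambda>j. LINT z:QT T|lborel. rho j z powr k j * g z) \<longlonglongrightarrow> (LINT z:QT T|lborel. p z * g z)"
begin

lemma L1_tendsto_on_bounded:
  assumes B: "B \<in> sets lborel" "bounded B" "B \<subseteq> QT T"
  shows "(\<lambda>j. \<integral>\<^sup>+z. ennreal (\<bar>rho j z - r z\<bar> * indicator B z) \<partial>lborel) \<longlonglongrightarrow> 0"
proof -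
  obtain R where R: "\<forall>z\<in>B. norm z \<le> R"
    using B(2) bounded_iff by blast
  define K where "K = cball (0::real^'d) R"
  have BK: "B \<subseteq> {0..T} \<times> K"
  proof
    fix z assume "z \<in> B"
    moreover have "norm (snd z) \<le> norm z"
      using norm_snd_le[of "snd z" "fst z"] by simp
    ultimately have "fst z \<in> {0..T}" "norm (snd z) \<le> R"
      using B(3) R unfolding QT_def by (auto simp: mem_Times_iff)
    then show "z \<in> {0..T} \<times> K"
      unfolding K_def by (simp add: mem_Times_iff)
  qed
  define S where "S j = (SUP t\<in>{0..T}. \<integral>\<^sup>+ x\<in>K. ennreal \<bar>rho j (t, x) - r (t, x)\<bar> \<partial>lborel)" for j
  have "(\<integral>\<^sup>+z. ennreal (\<bar>rho j z - r z\<bar> * indicator B z) \<partial>lborel)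
      \<le> (\<integral>\<^sup>+z. ennreal \<bar>rho j z - r z\<bar> * indicator ({0..T} \<times> K) z \<partial>lborel)" for j
  proof (rule nn_integral_mono)
    fix z
    show "ennreal (\<bar>rho j z - r z\<bar> * indicator B z) \<le> ennreal \<bar>rho j z - r z\<bar> * indicator ({0..T} \<times> K) z"
      using BK by (cases "z \<in> B") auto
  qed
  also have "\<dots> j \<le> ennreal (T - 0) * S j" for j
    unfolding S_def
  proof (rule nn_integral_slab_le_SUP)
    show "(\<lambda>z. ennreal \<bar>rho j z - r z\<bar>) \<in> borel_measurable lborel"
      by measurable
    show "K \<in> sets lborel" "0 \<le> T"
      using T_pos by (simp_all add: K_def)
  qed
  finally have le: "(\<integral>\<^sup>+z. ennreal (\<bar>rho j z - r z\<bar> * indicator B z) \<partial>lborel) \<le> ennreal T * S j" for j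
    by simp
  have "(\<lambda>j. ennreal T * S j) \<longlonglongrightarrow> ennreal T * 0"
    unfolding S_def K_def by (intro ennreal_tendsto_cmult rho_conv) simp_all
  then have lim: "(\<lambda>j. ennreal T * S j) \<longlonglongrightarrow> 0"
    by simp
  show ?thesis
    by (rule tendsto_sandwich[OF _ _ tendsto_const lim]) (simp_all add: le)
qed

lemma r_bounds: "AE z in lborel. z \<in> QT T \<longrightarrow> 0 \<le> r z \<and> r z \<le> 1"
proof (rule AE_on_if_AE_on_cballs)
  fix n :: nat
  define B where "B = QT T \<inter> cball (0 :: real \<times> (real^'d)) n"
  have "B \<in> sets lborel"
    unfolding B_def by (rule sets.Int[OF sets_QT]) simp
  then have B: "B \<in> sets lborel" "bounded B" "B \<subseteq> QT T"
    unfolding B_def by auto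
  define d where "d z = ennreal (max (- r z) (r z - 1) * indicator B z)" for z
  have "d z \<le> ennreal (\<bar>rho j z - r z\<bar> * indicator B z)" for j z
  proof (cases "z \<in> B")
    case True
    with B(3) have "0 \<le> rho j z" "rho j z \<le> 1"
      using rho_bounds by blast+
    with True show ?thesis
      unfolding d_def by (intro ennreal_leI) auto
  qed (simp add: d_def)
  then have "(\<integral>\<^sup>+z. d z \<partial>lborel) \<le> 0"
    by (intro LIMSEQ_le_const[OF L1_tendsto_on_bounded[OF B]] exI[of _ 0] allI impI nn_integral_mono)
  moreover have "d \<in> borel_measurable lborel"
    unfolding d_def using B(1) by measurable
  ultimately have "AE z in lborel. d z = 0"
    by (simp add: nn_integral_0_iff_AE[symmetric])
  then show "AE z in lborel. z \<in> QT T \<inter> cball 0 n \<longrightarrow> 0 \<le> r z \<and> r z \<le> 1"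
    by eventually_elim (auto simp: d_def B_def indicator_def ennreal_eq_0_iff)
qed

lemma pressure_bounds: "z \<in> QT T \<Longrightarrow> 0 \<le> rho j z powr k j \<and> rho j z powr k j \<le> 1"
  using rho_bounds[of z j] k_pos[of j] by (simp add: powr_le1)

lemma Linf_rho: "Linf (QT T) (rho j)"
  unfolding Linf_def using rho_bounds by (intro conjI rho_meas exI[of _ 1] AE_I2) force

lemma Linf_pressure: "Linf (QT T) (\<lambda>z. rho j z powr k j)"
  unfolding Linf_def using pressure_bounds by (intro conjI exI[of _ 1] AE_I2) (force, measurable)

lemma Linf_r: "Linf (QT T) r"
  unfolding Linf_def using r_bounds by (intro conjI r_meas exI[of _ 1]) (auto elim!: eventually_mono)

lemma tendsto_set_integral_transfer:
  assumes G: "Linf_bounded_support (QT T) G"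
    and a: "\<And>j. Linf (QT T) (a j)" and b: "\<And>j. Linf (QT T) (b j)"
    and close: "\<And>j z. z \<in> QT T \<Longrightarrow> \<bar>a j z - b j z\<bar> \<le> \<bar>rho j z - r z\<bar>"
    and lim: "(\<lambda>j. LINT z:QT T|lborel. b j z * G z) \<longlonglongrightarrow> l"
  shows "(\<lambda>j. LINT z:QT T|lborel. a j z * G z) \<longlonglongrightarrow> l"
proof -
  obtain B C where B: "B \<in> sets lborel" "bounded B" "B \<subseteq> QT T" "\<And>z. z \<notin> B \<Longrightarrow> G z = 0"
    and C: "AE z in lborel. \<bar>G z\<bar> \<le> C"
    using G unfolding Linf_bounded_support_def Linf_def by auto
  show ?thesis
    unfolding set_lebesgue_integral_def
  proof (rule tendsto_integral_if_L1_close[where g = "\<lambda>j z. indicator (QT T) z *\<^sub>R (b j z * G z)"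
        and h = "\<lambda>j z. \<bar>rho j z - r z\<bar> * indicator B z" and C = "\<bar>C\<bar>"])
    show "integrable lborel (\<lambda>z. indicator (QT T) z *\<^sub>R (a j z * G z))"
      "integrable lborel (\<lambda>z. indicator (QT T) z *\<^sub>R (b j z * G z))" for j
      using Linf_bounded_support_set_integrable[OF G sets_QT] a b unfolding set_integrable_def by blast+
    show "(\<lambda>z. \<bar>rho j z - r z\<bar> * indicator B z) \<in> borel_measurable lborel" for j
      using B(1) by measurable
    show "(\<lambda>j. \<integral>\<^sup>+z. ennreal (\<bar>rho j z - r z\<bar> * indicator B z) \<partial>lborel) \<longlonglongrightarrow> 0"
      by (rule L1_tendsto_on_bounded[OF B(1-3)])
    show "AE z in lborel. \<bar>indicator (QT T) z *\<^sub>R (a j z * G z) - indicator (QT T) z *\<^sub>R (b j z * G z)\<bar>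
        \<le> \<bar>C\<bar> * (\<bar>rho j z - r z\<bar> * indicator B z)" for j
      using C
    proof eventually_elim
      case (elim z)
      show ?case
      proof (cases "z \<in> B")
        case True
        with B(3) have z: "z \<in> QT T"
          by blast
        have "\<bar>indicator (QT T) z *\<^sub>R (a j z * G z) - indicator (QT T) z *\<^sub>R (b j z * G z)\<bar>
            = \<bar>a j z - b j z\<bar> * \<bar>G z\<bar>"
          using z by (simp add: abs_mult left_diff_distrib[symmetric])
        also have "\<dots> \<le> \<bar>rho j z - r z\<bar> * \<bar>C\<bar>"
          using elim close[OF z] by (intro mult_mono) auto
        finally show ?thesis
          using True by (simp add: mult.commute)
      qed (simp add: B(4))
    qed
    show "(\<lambda>j. \<integral>z. indicator (QT T) z *\<^sub>R (b j z * G z) \<partial>lborel) \<longlonglongrightarrow> l"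
      using lim unfolding set_lebesgue_integral_def .
  qed simp
qed

lemma tendsto_set_integral_rho:
  assumes "Linf_bounded_support (QT T) G"
  shows "(\<lambda>j. LINT z:QT T|lborel. rho j z * G z) \<longlonglongrightarrow> (LINT z:QT T|lborel. r z * G z)"
  by (rule tendsto_set_integral_transfer[where b = "\<lambda>_. r", OF assms Linf_rho Linf_r]) simp_all

lemma tendsto_set_integral_pressure_rho:
  assumes G: "Linf_bounded_support (QT T) G"
  shows "(\<lambda>j. LINT z:QT T|lborel. rho j z powr k j * rho j z * G z) \<longlonglongrightarrow> (LINT z:QT T|lborel. p z * r z * G z)"
proof (rule tendsto_set_integral_transfer[where b = "\<lambda>j z. rho j z powr k j * r z", OF G])
  show "Linf (QT T) (\<lambda>z. rho j z powr k j * rho j z)" "Linf (QT T) (\<lambda>z. rho j z powr k j * r z)" for j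
    by (intro Linf_mult Linf_pressure Linf_rho Linf_r)+
  show "\<bar>rho j z powr k j * rho j z - rho j z powr k j * r z\<bar> \<le> \<bar>rho j z - r z\<bar>" if "z \<in> QT T" for j z
    using pressure_bounds[OF that, of j]
    by (auto simp: right_diff_distrib[symmetric] abs_mult intro: mult_left_le_one_le)
  have "(\<lambda>j. LINT z:QT T|lborel. rho j z powr k j * (r z * G z)) \<longlonglongrightarrow> (LINT z:QT T|lborel. p z * (r z * G z))"
    by (intro p_conv Linf_bounded_support_set_integrable[OF G sets_QT Linf_r])
  then show "(\<lambda>j. LINT z:QT T|lborel. rho j z powr k j * r z * G z) \<longlonglongrightarrow> (LINT z:QT T|lborel. p z * r z * G z)"
    by (simp add: mult.assoc)
qed

lemma tendsto_set_integral_pressure: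
  assumes A: "A \<in> sets lborel" "bounded A" "A \<subseteq> QT T"
  shows "(\<lambda>j. LINT z:A|lborel. rho j z powr k j) \<longlonglongrightarrow> (LINT z:A|lborel. p z)"
proof -
  have "set_integrable lborel (QT T) (indicator A :: _ \<Rightarrow> real)"
    using Linf_bounded_support_set_integrable[OF Linf_bounded_support_indicator[OF A] sets_QT Linf_const[of _ 1]]
    by simp
  then have "(\<lambda>j. LINT z:QT T|lborel. rho j z powr k j * indicator A z)
      \<longlonglongrightarrow> (LINT z:QT T|lborel. p z * indicator A z)"
    by (intro p_conv) simp
  then show ?thesis
    by (simp add: set_integral_mult_indicator_subset[OF A(3)])
qed

lemma p_bounds: "AE z in lborel. z \<in> QT T \<longrightarrow> 0 \<le> p z \<and> p z \<le> 1"
proof -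
  have int: "set_integrable lborel A (\<lambda>z. rho j z powr k j)" "set_integrable lborel A (\<lambda>_. c)"
    if "A \<in> sets lborel" "bounded A" "A \<subseteq> QT T" for A j and c :: real
    using that by (auto intro: Linf_set_integrable[OF Linf_pressure] Linf_set_integrable[OF Linf_const])
  have "AE z in lborel. z \<in> QT T \<longrightarrow> 0 \<le> p z"
  proof (rule AE_le_if_set_integrals_le[OF Linf_const p_Linf sets_QT])
    fix A :: "(real \<times> (real^'d)) set"
    assume A: "A \<in> sets lborel" "bounded A" "A \<subseteq> QT T"
    have "(LINT z:A|lborel. 0) \<le> (LINT z:A|lborel. rho j z powr k j)" for j
      using A pressure_bounds by (intro set_integral_mono int) auto
    then show "(LINT z:A|lborel. 0) \<le> (LINT z:A|lborel. p z)"
      by (intro LIMSEQ_le_const[OF tendsto_set_integral_pressure[OF A]]) auto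
  qed
  moreover have "AE z in lborel. z \<in> QT T \<longrightarrow> p z \<le> 1"
  proof (rule AE_le_if_set_integrals_le[OF p_Linf Linf_const sets_QT])
    fix A :: "(real \<times> (real^'d)) set"
    assume A: "A \<in> sets lborel" "bounded A" "A \<subseteq> QT T"
    have "(LINT z:A|lborel. rho j z powr k j) \<le> (LINT z:A|lborel. 1)" for j
      using A pressure_bounds by (intro set_integral_mono int) auto
    then show "(LINT z:A|lborel. p z) \<le> (LINT z:A|lborel. 1)"
      by (intro LIMSEQ_le_const2[OF tendsto_set_integral_pressure[OF A]]) auto
  qed
  ultimately show ?thesis
    by eventually_elim auto
qed

lemma tendsto_set_integral_pressure_defect:
  assumes A: "A \<in> sets lborel" "bounded A" "A \<subseteq> QT T"
  shows "(\<lambda>j. LINT z:A|lborel. rho j z powr k j * (1 - rho j z)) \<longlonglongrightarrow> 0"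
proof -
  have int: "set_integrable lborel A (\<lambda>z. rho j z powr k j * (1 - rho j z))" for j
    using A by (intro Linf_set_integrable[OF Linf_mult[OF Linf_pressure Linf_diff[OF Linf_const Linf_rho]]]) auto
  have const: "set_integrable lborel A (\<lambda>_. c)" for c :: real
    using A by (intro Linf_set_integrable[OF Linf_const]) auto
  have bounds: "0 \<le> rho j z powr k j * (1 - rho j z)" "rho j z powr k j * (1 - rho j z) \<le> inverse (k j)"
    if "z \<in> A" for j z
    using that A(3) rho_bounds[of z j] pressure_bounds[of z j] k_pos[of j]
      powr_mult_one_minus_le[of "rho j z" "k j"]
    by (auto simp: divide_inverse)
  have "(LINT z:A|lborel. 0) \<le> (LINT z:A|lborel. rho j z powr k j * (1 - rho j z))" for j
    using bounds by (intro set_integral_mono int const)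
  then have lower: "0 \<le> (LINT z:A|lborel. rho j z powr k j * (1 - rho j z))" for j
    by simp
  have "(LINT z:A|lborel. rho j z powr k j * (1 - rho j z)) \<le> (LINT z:A|lborel. inverse (k j))" for j
    using bounds by (intro set_integral_mono int const)
  then have upper: "(LINT z:A|lborel. rho j z powr k j * (1 - rho j z)) \<le> measure lborel A * inverse (k j)" for j
    using A(1) emeasure_bounded_finite[OF A(2)] by (simp add: set_integral_const)
  have "(\<lambda>j. measure lborel A * inverse (k j)) \<longlonglongrightarrow> measure lborel A * 0"
    by (intro tendsto_mult tendsto_const tendsto_inverse_0_at_top k_lim)
  then have lim: "(\<lambda>j. measure lborel A * inverse (k j)) \<longlonglongrightarrow> 0"
    by simp
  show ?thesis
    by (rule tendsto_sandwich[OF _ _ tendsto_const lim]) (simp_all add: lower upper)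
qed

lemma complementarity_on:
  assumes A: "A \<in> sets lborel" "bounded A" "A \<subseteq> QT T"
  shows "(LINT z:A|lborel. p z * (1 - r z)) = 0"
proof -
  have G: "Linf_bounded_support (QT T) (indicator A)"
    by (rule Linf_bounded_support_indicator[OF A])
  have "(\<lambda>j. LINT z:QT T|lborel. rho j z powr k j * (1 - r z) * indicator A z) \<longlonglongrightarrow> 0"
  proof (rule tendsto_set_integral_transfer[where b = "\<lambda>j z. rho j z powr k j * (1 - rho j z)", OF G])
    show "Linf (QT T) (\<lambda>z. rho j z powr k j * (1 - r z))" "Linf (QT T) (\<lambda>z. rho j z powr k j * (1 - rho j z))" for j
      by (intro Linf_mult Linf_pressure Linf_diff Linf_const Linf_rho Linf_r)+
    show "\<bar>rho j z powr k j * (1 - r z) - rho j z powr k j * (1 - rho j z)\<bar> \<le> \<bar>rho j z - r z\<bar>"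
      if "z \<in> QT T" for j z
      using pressure_bounds[OF that, of j]
      by (auto simp: right_diff_distrib[symmetric] abs_mult intro: mult_left_le_one_le)
    show "(\<lambda>j. LINT z:QT T|lborel. rho j z powr k j * (1 - rho j z) * indicator A z) \<longlonglongrightarrow> 0"
      using tendsto_set_integral_pressure_defect[OF A] by (simp add: set_integral_mult_indicator_subset[OF A(3)])
  qed
  moreover have "(\<lambda>j. LINT z:QT T|lborel. rho j z powr k j * ((1 - r z) * indicator A z))
      \<longlonglongrightarrow> (LINT z:QT T|lborel. p z * ((1 - r z) * indicator A z))"
    by (intro p_conv Linf_bounded_support_set_integrable[OF G sets_QT Linf_diff[OF Linf_const Linf_r]])
  ultimately have "(LINT z:QT T|lborel. p z * (1 - r z) * indicator A z) = 0"
    by (simp add: mult.assoc LIMSEQ_unique)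
  then show ?thesis
    by (simp add: set_integral_mult_indicator_subset[OF A(3)])
qed

lemma complementarity: "AE z in lborel. z \<in> QT T \<longrightarrow> p z * (1 - r z) = 0"
proof -
  have Linf: "Linf (QT T) (\<lambda>z. p z * (1 - r z))"
    by (intro Linf_mult p_Linf Linf_diff Linf_const Linf_r)
  have "AE z in lborel. z \<in> QT T \<longrightarrow> p z * (1 - r z) \<le> 0"
    by (rule AE_le_if_set_integrals_le[OF Linf _ sets_QT]) (auto simp: Linf_def complementarity_on)
  with p_bounds r_bounds show ?thesis
  proof eventually_elim
    case (elim z)
    show ?case
    proof
      assume "z \<in> QT T"
      with elim have "0 \<le> p z * (1 - r z)" "p z * (1 - r z) \<le> 0"
        by simp_all
      then show "p z * (1 - r z) = 0"
        by linarith
    qed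
  qed
qed

lemma set_integral_viscous_expand:
  assumes G0: "Linf_bounded_support (QT T) G0" and G1: "Linf_bounded_support (QT T) G1"
    and G2: "Linf_bounded_support (QT T) G2"
  shows "(LINT z:QT T|lborel. rho j z * G0 z + Fk (k j) (rho j z) * G1 z + \<epsilon> * rho j z * G2 z)
    = (LINT z:QT T|lborel. rho j z * G0 z) + (LINT z:QT T|lborel. rho j z * G1 z)
      - (LINT z:QT T|lborel. rho j z powr k j * rho j z * G1 z)
      + \<epsilon> * (LINT z:QT T|lborel. rho j z * G2 z)"
proof -
  note int = Linf_bounded_support_set_integrable[OF _ sets_QT]
  have "(\<lambda>z. rho j z * G0 z + Fk (k j) (rho j z) * G1 z + \<epsilon> * rho j z * G2 z)
      = (\<lambda>z. (rho j z * G0 z + rho j z * G1 z - rho j z powr k j * rho j z * G1 z)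
          + \<epsilon> * (rho j z * G2 z))"
    by (simp add: Fk_def fun_eq_iff algebra_simps)
  moreover note int[OF G0 Linf_rho] int[OF G1 Linf_rho] int[OF G2 Linf_rho]
    int[OF G1 Linf_mult[OF Linf_pressure Linf_rho]]
  ultimately show ?thesis
    by simp
qed

lemma set_integral_limit_expand:
  assumes G0: "Linf_bounded_support (QT T) G0" and G1: "Linf_bounded_support (QT T) G1"
  shows "(LINT z:QT T|lborel. r z * G0 z + r z * (1 - p z) * G1 z)
    = (LINT z:QT T|lborel. r z * G0 z) + (LINT z:QT T|lborel. r z * G1 z)
      - (LINT z:QT T|lborel. p z * r z * G1 z)"
proof -
  note int = Linf_bounded_support_set_integrable[OF _ sets_QT]
  have "(\<lambda>z. r z * G0 z + r z * (1 - p z) * G1 z) = (\<lambda>z. r z * G0 z + r z * G1 z - p z * r z * G1 z)"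
    by (simp add: fun_eq_iff algebra_simps)
  moreover note int[OF G0 Linf_r] int[OF G1 Linf_r] int[OF G1 Linf_mult[OF p_Linf Linf_r]]
  ultimately show ?thesis
    by simp
qed

lemma limit_weak_formulation:
  assumes eps: "eps \<longlonglongrightarrow> 0"
    and G0: "Linf_bounded_support (QT T) G0" and G1: "Linf_bounded_support (QT T) G1"
    and G2: "Linf_bounded_support (QT T) G2"
    and weak: "\<And>j. (LINT z:QT T|lborel. rho j z * G0 z + Fk (k j) (rho j z) * G1 z
      + eps j * rho j z * G2 z) = 0"
  shows "(LINT z:QT T|lborel. r z * G0 z + r z * (1 - p z) * G1 z) = 0"
proof -
  let ?I = "\<lambda>a G. LINT z:QT T|lborel. a z * G z"
  have "(\<lambda>j. ?I (rho j) G0 + ?I (rho j) G1 - ?I (\<lambda>z. rho j z powr k j * rho j z) G1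
      + eps j * ?I (rho j) G2) \<longlonglongrightarrow> ?I r G0 + ?I r G1 - ?I (\<lambda>z. p z * r z) G1 + 0 * ?I r G2"
    by (intro tendsto_add tendsto_diff tendsto_mult eps
        tendsto_set_integral_rho tendsto_set_integral_pressure_rho G0 G1 G2)
  moreover have "?I (rho j) G0 + ?I (rho j) G1 - ?I (\<lambda>z. rho j z powr k j * rho j z) G1
      + eps j * ?I (rho j) G2 = 0" for j
    using weak[of j] set_integral_viscous_expand[OF G0 G1 G2, of j "eps j"] by simp
  ultimately have "?I r G0 + ?I r G1 - ?I (\<lambda>z. p z * r z) G1 = 0"
    using LIMSEQ_unique by fastforce
  then show ?thesis
    using set_integral_limit_expand[OF G0 G1] by simp
qed
end

lemma parabolic_sol_interior_weak_form:
  assumes sol: "parabolic_sol U rho0 T k eps rho" and \<phi>: "test_fun ({0<..<T} \<times> UNIV) \<phi>"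
  shows "(LINT z:QT T|lborel. rho z * dt \<phi> z + Fk k (rho z) * (U (snd z) \<bullet> grad_x \<phi> z)
      + eps * rho z * lap_x \<phi> z) = 0"
proof -
  have supp: "closure {z. \<phi> z \<noteq> 0} \<subseteq> {0<..<T} \<times> UNIV"
    using \<phi> unfolding test_fun_def by (elim conjE)
  have "closure {z. \<phi> z \<noteq> 0} \<subseteq> {..<T} \<times> UNIV"
    by (rule order_trans[OF supp]) auto
  then have "test_fun ({..<T} \<times> UNIV) \<phi>"
    using \<phi> unfolding test_fun_def by (elim conjE) (intro conjI)
  then have "(LINT z:QT T|lborel. rho z * dt \<phi> z + Fk k (rho z) * (U (snd z) \<bullet> grad_x \<phi> z)
      + eps * rho z * lap_x \<phi> z) + (\<integral>x. rho0 x * \<phi> (0, x) \<partial>lborel) = 0"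
    using sol unfolding parabolic_sol_def by (elim conjE allE impE)
  moreover have "\<phi> (0, x) = 0" for x
  proof (rule ccontr)
    assume "\<phi> (0, x) \<noteq> 0"
    then have "(0, x) \<in> closure {z. \<phi> z \<noteq> 0}"
      by (intro subsetD[OF closure_subset]) simp
    with supp show False
      by auto
  qed
  ultimately show ?thesis
    by simp
qed

theorem mainTheorem4:
  fixes U :: "real^'d::finite \<Rightarrow> real^'d"
    and rho0 :: "real^'d \<Rightarrow> real"
    and T :: real
    and k eps :: "nat \<Rightarrow> real"
    and rho :: "nat \<Rightarrow> real \<times> (real^'d) \<Rightarrow> real"
    and r p :: "real \<times> (real^'d) \<Rightarrow> real"
  assumes T_pos: "T > 0"
    and U_W2inf: "W2inf U"
    and rho0_int: "integrable lborel rho0"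
    and rho0_bounds: "AE x in lborel. 0 \<le> rho0 x \<and> rho0 x \<le> 1"
    and rho0_BV: "BV rho0"
    and rho0_mass: "(\<integral>x. rho0 x \<partial>lborel) = 1"
    and DSU: "DSU_nonpos U"
    and k_pos: "\<forall>j. k j > 0"
    and k_lim: "filterlim k at_top sequentially"
    and eps_lim: "eps \<longlonglongrightarrow> 0"
    and eps_bounds: "\<forall>j. 0 < eps j \<and> eps j \<le> 1"
    and sol: "\<forall>j. parabolic_sol U rho0 T (k j) (eps j) (rho j)"
    and r_meas: "r \<in> borel_measurable lborel"
    and r_L1loc: "\<forall>t\<in>{0..T}. \<forall>K. compact K \<longrightarrow> set_integrable lborel K (\<lambda>x. r (t, x))"
    and rho_conv: "\<forall>K::(real^'d) set. compact K \<longrightarrow>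
        (\<lambda>j. SUP t\<in>{0..T}. \<integral>\<^sup>+ x\<in>K. ennreal \<bar>rho j (t, x) - r (t, x)\<bar> \<partial>lborel)
          \<longlonglongrightarrow> 0"
    and p_Linf: "Linf (QT T) p"
    and p_conv: "\<forall>g. set_integrable lborel (QT T) g \<longrightarrow>
        (\<lambda>j. LINT z:QT T|lborel. (rho j z powr k j) * g z)
          \<longlonglongrightarrow> (LINT z:QT T|lborel. p z * g z)"
  shows "(AE z in lborel. z \<in> QT T \<longrightarrow> 0 \<le> r z \<and> r z \<le> 1)
       \<and> (AE z in lborel. z \<in> QT T \<longrightarrow> 0 \<le> p z \<and> p z \<le> 1)
       \<and> (\<forall>\<phi>. test_fun ({0<..<T} \<times> UNIV) \<phi> \<longrightarrow>
            (LINT z:QT T|lborel. r z * dt \<phi> z + r z * (1 - p z) * (U (snd z) \<bullet> grad_x \<phi> z)) = 0)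
       \<and> (AE z in lborel. z \<in> QT T \<longrightarrow> p z * (1 - r z) = 0)"
proof -
  have sol_j: "parabolic_sol U rho0 T (k j) (eps j) (rho j)" for j
    using sol by blast
  interpret incompressible_limit T k rho r p
  proof
    show "rho j \<in> borel_measurable lborel" "z \<in> QT T \<Longrightarrow> 0 \<le> rho j z \<and> rho j z \<le> 1" for j z
      using sol_j[of j] unfolding parabolic_sol_def Linf_def by blast+
  qed (use T_pos k_pos k_lim r_meas p_Linf rho_conv p_conv in blast)+
  have "(LINT z:QT T|lborel. r z * dt \<phi> z + r z * (1 - p z) * (U (snd z) \<bullet> grad_x \<phi> z)) = 0"
    if \<phi>: "test_fun ({0<..<T} \<times> UNIV) \<phi>" for \<phi>
  proof (rule limit_weak_formulation[OF eps_lim])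
    show "Linf_bounded_support (QT T) (dt \<phi>)"
      by (rule Linf_bounded_support_mono[OF test_fun_dt[OF \<phi>] cylinder_subset_QT])
    show "Linf_bounded_support (QT T) (\<lambda>z. U (snd z) \<bullet> grad_x \<phi> z)"
      by (rule Linf_bounded_support_mono[OF test_fun_transport[OF U_W2inf \<phi>] cylinder_subset_QT])
    show "Linf_bounded_support (QT T) (lap_x \<phi>)"
      by (rule Linf_bounded_support_mono[OF test_fun_lap_x[OF \<phi>] cylinder_subset_QT])
    show "(LINT z:QT T|lborel. rho j z * dt \<phi> z + Fk (k j) (rho j z) * (U (snd z) \<bullet> grad_x \<phi> z)
        + eps j * rho j z * lap_x \<phi> z) = 0" for j
      by (rule parabolic_sol_interior_weak_form[OF sol_j \<phi>])
  qed
  then show ?thesis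
    using r_bounds p_bounds complementarity by blast
qed

end
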